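(* Let $p$ be a prime and let $(\alpha,\delta)\in\mathbb{O}_p\times(\mathbb{Q}_{\ge0}\cup\{\infty\})$ be an admissible pair. Then $$\mathbb{Z}_{(p)}[X]\cap M_{(p),\alpha,\delta}=\begin{cases}p\,\mathbb{Z}_{(p)}[X], & \delta=0,\\ (p,g_\alpha(X)), & \delta>0,\end{cases}$$ where $g_\alpha\in\mathbb{Z}_{(p)}[X]$ is a monic polynomial whose reduction modulo $p$ is the minimal polynomial over $\mathbb{F}_p$ of the residue $\overline{\alpha}$ of $\alpha$ modulo $\mathbb{M}_p$.
   Context: Fix a prime $p$. $\overline{\mathbb{Q}_p}$ is an algebraic closure of $\mathbb{Q}_p$, $v_p$ the unique extension of the $p$-adic valuation, $\mathbb{C}_p$ the completion of $\overline{\mathbb{Q}_p}$, $\mathbb{O}_p=\{x\in\mathbb{C}_p:v_p(x)\ge0\}$ with maximal ideal $\mathbb{M}_p$ (its residue field is an algebraic closure of $\mathbb{F}_p=\mathbb{Z}/p\mathbb{Z}$). A pair $(\alpha,\delta)\in\mathbb{C}_p\times(\mathbb{Q}\cup\{\infty\})$ is admissible if: when $\delta\in\mathbb{Q}$, $\alpha\in\overline{\mathbb{Q}_p}$; when $\delta=\infty$, $\alpha$ is transcendental over $\mathbb{Q}$. For $\delta\in\mathbb{Q}$, $v_{p,\alpha,\delta}$ is the monomial valuation on $\mathbb{C}_p(X)$ given on polynomials by $v_{p,\alpha,\delta}(\sum_i a_i(X-\alpha)^i)=\min_i\{v_p(a_i)+i\delta\}$; for $\delta=\infty$, $v_{p,\alpha,\infty}(\varphi)=v_p(\varphi(\alpha))$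 for $\varphi\in\mathbb{Q}(X)$. $\mathbb{Z}_{(p),\alpha,\delta}=\{\varphi\in\mathbb{Q}(X):v_{p,\alpha,\delta}(\varphi)\ge0\}$ and $M_{(p),\alpha,\delta}=\{\varphi\in\mathbb{Q}(X):v_{p,\alpha,\delta}(\varphi)>0\}$ is its maximal ideal. *)

theory Defs
  imports "HOL-Computational_Algebra.Computational_Algebra" "HOL-Library.Extended_Real"
begin

definition padic_val_rat :: "nat \<Rightarrow> rat \<Rightarrow> int" where
  "padic_val_rat p q =
     int (multiplicity (int p) (fst (quotient_of q))) - int (multiplicity (int p) (snd (quotient_of q)))"

definition in_Zp :: "nat \<Rightarrow> rat \<Rightarrow> bool" where
  "in_Zp p q \<longleftrightarrow> \<not> (int p dvd snd (quotient_of q))"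

definition Zp_poly :: "nat \<Rightarrow> rat poly \<Rightarrow> bool" where
  "Zp_poly p f \<longleftrightarrow> (\<forall>i. in_Zp p (coeff f i))"

definition in_pZp :: "nat \<Rightarrow> rat \<Rightarrow> bool" where
  "in_pZp p q \<longleftrightarrow> in_Zp p (q / of_nat p)"

(* These properties characterise
   C_p up to isomorphism of valued fields. *)
definition is_Cp :: "nat \<Rightarrow> ('a::field_char_0 \<Rightarrow> ereal) \<Rightarrow> bool" where
  "is_Cp p v \<longleftrightarrow>
     (\<forall>x. v x = \<infinity> \<longleftrightarrow> x = 0) \<and>
     (\<forall>x. v x \<noteq> -\<infinity>) \<and>
     (\<forall>x y. v (x * y) = v x + v y) \<and>
     (\<forall>x y. min (v x) (v y) \<le> v (x + y)) \<and>
     (\<forall>q. q \<noteq> 0 \<longrightarrow> v (of_rat q) = ereal (of_int (padic_val_rat p q))) \<and>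
     (\<forall>f :: 'a poly. degree f > 0 \<longrightarrow> (\<exists>x. poly f x = 0)) \<and>
     (\<forall>s :: nat \<Rightarrow> 'a. (\<forall>N::real. \<exists>M. \<forall>m\<ge>M. \<forall>n\<ge>M. ereal N \<le> v (s m - s n)) \<longrightarrow>
          (\<exists>x. \<forall>N::real. \<exists>M. \<forall>n\<ge>M. ereal N \<le> v (s n - x))) \<and>
     (\<forall>x. \<forall>N::real. \<exists>y. algebraic y \<and> ereal N \<le> v (x - y))"

(* x \<in> Q_p, i.e. x lies in the closure of Q in K *)
definition in_Qp :: "('a::field_char_0 \<Rightarrow> ereal) \<Rightarrow> 'a \<Rightarrow> bool" where
  "in_Qp v x \<longleftrightarrow> (\<forall>N::real. \<exists>q::rat. ereal N \<le> v (x - of_rat q))"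

definition in_Qpbar :: "('a::field_char_0 \<Rightarrow> ereal) \<Rightarrow> 'a \<Rightarrow> bool" where
  "in_Qpbar v x \<longleftrightarrow> (\<exists>f :: 'a poly. f \<noteq> 0 \<and> (\<forall>i. in_Qp v (coeff f i)) \<and> poly f x = 0)"

definition admissible :: "('a::field_char_0 \<Rightarrow> ereal) \<Rightarrow> 'a \<Rightarrow> ereal \<Rightarrow> bool" where
  "admissible v \<alpha> \<delta> \<longleftrightarrow>
     (\<exists>q::rat. \<delta> = ereal (of_rat q) \<and> in_Qpbar v \<alpha>) \<or> (\<delta> = \<infinity> \<and> \<not> algebraic \<alpha>)"

(* v_{p,\<alpha>,\<delta>} on Q[X]: min_i (v(a_i) + i \<delta>) where f = \<Sum> a_i (X - \<alpha>)^i,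
   resp. v(f(\<alpha>)) if \<delta> = \<infinity> *)
definition mono_val :: "('a::field_char_0 \<Rightarrow> ereal) \<Rightarrow> 'a \<Rightarrow> ereal \<Rightarrow> rat poly \<Rightarrow> ereal" where
  "mono_val v \<alpha> \<delta> f =
     (if \<delta> = \<infinity> then v (poly (map_poly of_rat f) \<alpha>)
      else Min ((\<lambda>i. v (coeff (pcompose (map_poly of_rat f) [:\<alpha>, 1:]) i) + ereal (real i) * \<delta>)
                ` {..degree f}))"

(* g \<in> Z_(p)[X] monic whose reduction mod p is the minimal polynomial over F_p of
   the residue of \<alpha>: the reduction vanishes at the residue of \<alpha>, and every
   polynomial of smaller degree whose reduction vanishes there reduces to 0. *)
definition lift_of_minpoly :: "nat \<Rightarrow> ('a::field_char_0 \<Rightarrow> ereal) \<Rightarrow> 'a \<Rightarrow> rat poly \<Rightarrow> bool" where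
  "lift_of_minpoly p v \<alpha> g \<longleftrightarrow>
     Zp_poly p g \<and> lead_coeff g = 1 \<and> 0 < v (poly (map_poly of_rat g) \<alpha>) \<and>
     (\<forall>h. Zp_poly p h \<and> degree h < degree g \<and> 0 < v (poly (map_poly of_rat h) \<alpha>)
          \<longrightarrow> (\<forall>i. in_pZp p (coeff h i)))"

end

theory Submission
  imports Defs
begin

(*
  Only the valuation axioms of C_p enter the proof (neither completeness nor algebraic
  closedness).

  Write f(X + alpha) = \<Sum> b_i X^i.  For delta = 0, v_{p,alpha,0}(f) = min_i v(b_i) is the Gauss
  valuation of f(X + alpha); since v(alpha) >= 0, the substitutions X -> X + alpha and
  X -> X - alpha both preserve integrality of coefficients, so this equals the Gauss valuation
  of f, which is positive exactly on p Z_(p)[X].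
  For delta > 0 and f in Z_(p)[X], every term v(b_i) + i delta with i >= 1 is positive, so
  v_{p,alpha,delta}(f) > 0 iff v(f(alpha)) > 0.  Dividing f by the monic g in Z_(p)[X] gives
  f = g q + r with r in Z_(p)[X], deg r < deg g and v(r(alpha)) > 0; minimality of the reduction
  of g forces r into p Z_(p)[X].
*)

lemma in_Zp_iff_padic_val_rat_nonneg:
  assumes "prime p" and "q \<noteq> 0"
  shows "in_Zp p q \<longleftrightarrow> 0 \<le> padic_val_rat p q"
proof -
  obtain a b where ab: "quotient_of q = (a, b)" by (cases "quotient_of q")
  have "b \<noteq> 0"
    using quotient_of_denom_pos[OF ab] by simp
  have p: "prime (int p)" using assms(1) by simp
  then have "\<not> (int p dvd a \<and> int p dvd b)"
    using quotient_of_coprime[OF ab] coprime_common_divisor not_prime_unit by blast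
  then have "multiplicity (int p) a = 0 \<or> multiplicity (int p) b = 0"
    by (meson not_dvd_imp_multiplicity_0)
  moreover have "in_Zp p q \<longleftrightarrow> multiplicity (int p) b = 0"
    using \<open>b \<noteq> 0\<close> p not_prime_unit by (metis in_Zp_def ab multiplicity_eq_zero_iff snd_conv)
  ultimately show ?thesis
    by (auto simp: padic_val_rat_def ab)
qed

lemma in_pZp_coeffs_iff_smult_p:
  assumes "p > 0"
  shows "(\<forall>i. in_pZp p (coeff f i)) \<longleftrightarrow> (\<exists>h. Zp_poly p h \<and> f = smult (of_nat p) h)"
proof
  assume "\<forall>i. in_pZp p (coeff f i)"
  then have "Zp_poly p (smult (1 / of_nat p) f)"
    by (simp add: Zp_poly_def in_pZp_def)
  moreover have "f = smult (of_nat p) (smult (1 / of_nat p) f)"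
    using assms by simp
  ultimately show "\<exists>h. Zp_poly p h \<and> f = smult (of_nat p) h" by blast
qed (use assms in \<open>auto simp: Zp_poly_def in_pZp_def\<close>)

lemma map_poly_of_rat_add: "map_poly of_rat (f + g) = map_poly of_rat f + map_poly of_rat g"
  by (simp add: poly_eq_iff coeff_map_poly of_rat_add)

lemma map_poly_of_rat_diff: "map_poly of_rat (f - g) = map_poly of_rat f - map_poly of_rat g"
  by (simp add: poly_eq_iff coeff_map_poly of_rat_diff)

lemma map_poly_of_rat_mult: "map_poly of_rat (f * g) = map_poly of_rat f * map_poly of_rat g"
  by (simp add: poly_eq_iff coeff_map_poly coeff_mult of_rat_sum of_rat_mult)

lemma map_poly_of_rat_smult: "map_poly of_rat (smult c f) = smult (of_rat c) (map_poly of_rat f)"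
  by (simp add: poly_eq_iff coeff_map_poly of_rat_mult)

lemma degree_sub_leading_multiple_less:
  fixes f g :: "'a::field poly"
  assumes "lead_coeff g = 1" and "degree g \<le> degree f"
  defines "f' \<equiv> f - monom (lead_coeff f) (degree f - degree g) * g"
  shows "f' = 0 \<or> degree f' < degree f"
proof -
  let ?r = "monom (lead_coeff f) (degree f - degree g)"
  have "degree (?r * g) \<le> degree f"
    using degree_mult_le[of ?r g] degree_monom_le[of "lead_coeff f" "degree f - degree g"] assms(2)
    by linarith
  then have "degree f' \<le> degree f"
    unfolding f'_def by (intro degree_diff_le) simp_all
  moreover have "coeff f' (degree f) = 0"
    using assms by (simp add: f'_def coeff_monom_mult)
  ultimately show ?thesis
    by (metis leading_coeff_0_iff le_neq_implies_less)
qed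

locale padic_valuation =
  fixes p :: nat and v :: "'a::field_char_0 \<Rightarrow> ereal"
  assumes prime: "prime p"
    and v_zero: "v 0 = \<infinity>"
    and v_mult: "v (x * y) = v x + v y"
    and v_add: "min (v x) (v y) \<le> v (x + y)"
    and v_of_rat: "q \<noteq> 0 \<Longrightarrow> v (of_rat q) = ereal (of_int (padic_val_rat p q))"

lemma is_Cp_imp_padic_valuation: "prime p \<Longrightarrow> is_Cp p v \<Longrightarrow> padic_valuation p v"
  by (simp add: is_Cp_def padic_valuation_def)

context padic_valuation
begin

lemma v_one: "v 1 = 0"
  using v_of_rat[of 1] by (simp add: padic_val_rat_def)

lemma v_uminus: "v (- x) = v x"
proof -
  have "v (- 1) = 0"
    using v_of_rat[of "- 1"] by (simp add: padic_val_rat_def)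
  then show ?thesis
    using v_mult[of "- 1" x] by simp
qed

lemma v_diff: "min (v x) (v y) \<le> v (x - y)"
  using v_add[of x "- y"] by (simp add: v_uminus)

lemma v_mult_ge: "c \<le> v x \<Longrightarrow> d \<le> v y \<Longrightarrow> c + d \<le> v (x * y)"
  by (simp add: v_mult add_mono)

lemma v_mult_pos: "0 < v x \<Longrightarrow> 0 \<le> v y \<Longrightarrow> 0 < v (x * y)"
  by (simp add: v_mult add_pos_nonneg)

lemma v_add_pos: "0 < v x \<Longrightarrow> 0 < v y \<Longrightarrow> 0 < v (x + y)"
  using v_add[of x y] by (metis min_less_iff_conj less_le_trans)

lemma v_diff_pos: "0 < v x \<Longrightarrow> 0 < v y \<Longrightarrow> 0 < v (x - y)"
  using v_diff[of x y] by (metis min_less_iff_conj less_le_trans)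

lemma v_of_nat_p: "v (of_nat p) = 1"
proof -
  have "prime (int p)" using prime by simp
  then have "multiplicity (int p) (int p) = 1"
    by (intro multiplicity_self) (auto simp: not_prime_unit)
  moreover have "quotient_of (of_nat p) = (int p, 1)"
    using quotient_of_int[of "int p"] by simp
  ultimately show ?thesis
    using v_of_rat[of "of_nat p"] prime_gt_0_nat[OF prime] by (simp add: padic_val_rat_def)
qed

lemma v_of_rat_nonneg_iff: "0 \<le> v (of_rat q) \<longleftrightarrow> in_Zp p q"
proof (cases "q = 0")
  case True
  have "\<not> int p dvd 1" using prime_gt_1_nat[OF prime] by simp
  with True show ?thesis by (simp add: in_Zp_def v_zero)
next
  case False
  then show ?thesis
    using in_Zp_iff_padic_val_rat_nonneg[OF prime False] v_of_rat[OF False] by simp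
qed

lemma v_of_rat_pos_iff: "0 < v (of_rat q) \<longleftrightarrow> in_pZp p q"
proof (cases "q = 0")
  case True
  then show ?thesis using v_of_rat_nonneg_iff[of 0] by (simp add: in_pZp_def v_zero)
next
  case False
  have "p > 0" using prime prime_gt_0_nat by blast
  with False obtain k where k: "v (of_rat (q / of_nat p)) = ereal (of_int k)"
    using v_of_rat by simp
  have "q = q / of_nat p * of_nat p" using \<open>p > 0\<close> by simp
  then have "of_rat q = of_rat (q / of_nat p) * (of_rat (of_nat p) :: 'a)"
    by (metis of_rat_mult)
  then have "v (of_rat q) = ereal (of_int (k + 1))"
    by (simp add: v_mult v_of_nat_p k)
  moreover have "in_pZp p q \<longleftrightarrow> 0 \<le> k"
    using v_of_rat_nonneg_iff[of "q / of_nat p"] by (simp add: in_pZp_def k)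
  ultimately show ?thesis
    by (simp only: ereal_less(2) of_int_0_less_iff) linarith
qed

definition gauss_val :: "'a poly \<Rightarrow> ereal" where
  "gauss_val P = Min ((\<lambda>i. v (coeff P i)) ` {..degree P})"

lemma gauss_val_0 [simp]: "gauss_val 0 = \<infinity>"
  by (simp add: gauss_val_def v_zero)

lemma le_gauss_val_iff: "c \<le> gauss_val P \<longleftrightarrow> (\<forall>i. c \<le> v (coeff P i))"
proof -
  have "c \<le> gauss_val P \<longleftrightarrow> (\<forall>i\<le>degree P. c \<le> v (coeff P i))"
    by (auto simp: gauss_val_def)
  also have "\<dots> \<longleftrightarrow> (\<forall>i. c \<le> v (coeff P i))"
    by (metis coeff_eq_0 ereal_less_eq(1) not_le_imp_less v_zero)
  finally show ?thesis .
qed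

lemma gauss_val_pos_iff: "0 < gauss_val P \<longleftrightarrow> (\<forall>i. 0 < v (coeff P i))"
proof -
  have "0 < gauss_val P \<longleftrightarrow> (\<forall>i\<le>degree P. 0 < v (coeff P i))"
    by (auto simp: gauss_val_def)
  also have "\<dots> \<longleftrightarrow> (\<forall>i. 0 < v (coeff P i))"
    using coeff_eq_0[of P] v_zero by (metis not_le_imp_less ereal_less(5) zero_ereal_def)
  finally show ?thesis .
qed

lemma le_gauss_val_pCons_iff: "c \<le> gauss_val (pCons a P) \<longleftrightarrow> c \<le> v a \<and> c \<le> gauss_val P"
  unfolding le_gauss_val_iff by (metis coeff_pCons_0 coeff_pCons_Suc not0_implies_Suc)

lemma gauss_val_add: "c \<le> gauss_val P \<Longrightarrow> c \<le> gauss_val Q \<Longrightarrow> c \<le> gauss_val (P + Q)"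
  unfolding le_gauss_val_iff by (metis coeff_add min.bounded_iff order_trans v_add)

lemma gauss_val_uminus: "gauss_val (- P) = gauss_val P"
  by (simp add: gauss_val_def v_uminus)

lemma gauss_val_diff: "c \<le> gauss_val P \<Longrightarrow> c \<le> gauss_val Q \<Longrightarrow> c \<le> gauss_val (P - Q)"
  using gauss_val_add[of c P "- Q"] by (simp add: gauss_val_uminus)

lemma gauss_val_smult:
  "c \<le> v a \<Longrightarrow> d \<le> gauss_val P \<Longrightarrow> c + d \<le> gauss_val (smult a P)"
  by (simp add: le_gauss_val_iff v_mult_ge)

lemma gauss_val_mult:
  "c \<le> gauss_val P \<Longrightarrow> d \<le> gauss_val Q \<Longrightarrow> c + d \<le> gauss_val (P * Q)"
proof (induction P)
  case (pCons a P)
  then show ?case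
    by (simp add: le_gauss_val_pCons_iff gauss_val_add gauss_val_smult v_zero)
qed (simp add: le_gauss_val_iff v_zero)

lemma gauss_val_pcompose:
  "c \<le> gauss_val P \<Longrightarrow> 0 \<le> gauss_val Q \<Longrightarrow> c \<le> gauss_val (pcompose P Q)"
proof (induction P)
  case (pCons a P)
  then have "c \<le> gauss_val (Q * pcompose P Q)"
    using gauss_val_mult[of 0 Q c] by (simp add: le_gauss_val_pCons_iff)
  with pCons.prems show ?case
    unfolding pcompose_pCons by (intro gauss_val_add) (simp_all add: le_gauss_val_pCons_iff)
qed simp

lemma gauss_val_le_v_poly: "c \<le> gauss_val P \<Longrightarrow> 0 \<le> v x \<Longrightarrow> c \<le> v (poly P x)"
proof (induction P)
  case (pCons a P)
  then have "c \<le> v (x * poly P x)"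
    using v_mult_ge[of 0 x c] by (simp add: le_gauss_val_pCons_iff)
  with pCons.prems show ?case
    by (simp add: le_gauss_val_pCons_iff) (metis min.bounded_iff order_trans v_add)
qed (simp add: v_zero)

lemma gauss_val_pcompose_shift:
  assumes "0 \<le> v \<beta>"
  shows "gauss_val (pcompose P [:\<beta>, 1:]) = gauss_val P"
proof (rule antisym)
  have "gauss_val (pcompose P [:\<beta>, 1:])
          \<le> gauss_val (pcompose (pcompose P [:\<beta>, 1:]) [:- \<beta>, 1:])"
    by (rule gauss_val_pcompose[OF order_refl])
      (simp add: assms le_gauss_val_pCons_iff v_one v_uminus)
  also have "pcompose (pcompose P [:\<beta>, 1:]) [:- \<beta>, 1:] = P"
    by (simp add: pcompose_assoc[symmetric] pcompose_pCons)
  finally show "gauss_val (pcompose P [:\<beta>, 1:]) \<le> gauss_val P" .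
  show "gauss_val P \<le> gauss_val (pcompose P [:\<beta>, 1:])"
    using gauss_val_pcompose[of "gauss_val P" P "[:\<beta>, 1:]"] assms
    by (simp add: le_gauss_val_pCons_iff v_one)
qed

lemma Zp_poly_iff_gauss_val: "Zp_poly p f \<longleftrightarrow> 0 \<le> gauss_val (map_poly of_rat f)"
  by (simp add: Zp_poly_def le_gauss_val_iff coeff_map_poly v_of_rat_nonneg_iff)

lemma in_pZp_coeffs_iff_gauss_val:
  "(\<forall>i. in_pZp p (coeff f i)) \<longleftrightarrow> 0 < gauss_val (map_poly of_rat f)"
  by (simp add: gauss_val_pos_iff coeff_map_poly v_of_rat_pos_iff)

lemma Zp_poly_add: "Zp_poly p f \<Longrightarrow> Zp_poly p g \<Longrightarrow> Zp_poly p (f + g)"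
  by (simp add: Zp_poly_iff_gauss_val map_poly_of_rat_add gauss_val_add)

lemma Zp_poly_diff: "Zp_poly p f \<Longrightarrow> Zp_poly p g \<Longrightarrow> Zp_poly p (f - g)"
  by (simp add: Zp_poly_iff_gauss_val map_poly_of_rat_diff gauss_val_diff)

lemma Zp_poly_mult: "Zp_poly p f \<Longrightarrow> Zp_poly p g \<Longrightarrow> Zp_poly p (f * g)"
  using gauss_val_mult[of 0 _ 0] by (simp add: Zp_poly_iff_gauss_val map_poly_of_rat_mult)

lemma Zp_poly_monom: "in_Zp p c \<Longrightarrow> Zp_poly p (monom c n)"
  using v_of_rat_nonneg_iff[of 0] by (auto simp: Zp_poly_def coeff_monom v_zero)

lemma gauss_val_smult_p:
  "Zp_poly p h \<Longrightarrow> 1 \<le> gauss_val (map_poly of_rat (smult (of_nat p) h))"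
  using gauss_val_smult[of 1 "of_nat p" 0]
  by (simp add: Zp_poly_iff_gauss_val map_poly_of_rat_smult v_of_nat_p)

lemma Zp_poly_smult_p: "Zp_poly p h \<Longrightarrow> Zp_poly p (smult (of_nat p) h)"
  unfolding Zp_poly_iff_gauss_val[of "smult _ h"]
  by (rule order_trans[OF _ gauss_val_smult_p]) simp_all

lemma v_poly_nonneg: "Zp_poly p f \<Longrightarrow> 0 \<le> v x \<Longrightarrow> 0 \<le> v (poly (map_poly of_rat f) x)"
  by (simp add: Zp_poly_iff_gauss_val gauss_val_le_v_poly)

lemma Zp_poly_div_mod_monic:
  assumes "Zp_poly p g" and "lead_coeff g = 1" and "Zp_poly p f"
  shows "Zp_poly p (f div g) \<and> Zp_poly p (f mod g)"
  using assms(3)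
proof (induction "degree f" arbitrary: f rule: less_induct)
  case less
  have Zp_0: "Zp_poly p 0"
    by (simp add: Zp_poly_iff_gauss_val)
  show ?case
  proof (cases "degree f < degree g")
    case True
    then show ?thesis
      using less.prems Zp_0 by (simp add: div_poly_less mod_poly_less)
  next
    case False
    define r where "r = monom (lead_coeff f) (degree f - degree g)"
    define f' where "f' = f - r * g"
    have "Zp_poly p r"
      unfolding r_def using less.prems Zp_poly_def by (intro Zp_poly_monom) blast
    then have "Zp_poly p f'"
      using less.prems assms(1) by (simp add: f'_def Zp_poly_diff Zp_poly_mult)
    moreover have "f' = 0 \<or> degree f' < degree f"
      using degree_sub_leading_multiple_less[OF assms(2)] False by (simp add: f'_def r_def)
    ultimately have "Zp_poly p (f' div g) \<and> Zp_poly p (f' mod g)"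
      using less.hyps Zp_0 by auto
    moreover have "f = f' + r * g" by (simp add: f'_def)
    moreover have "g \<noteq> 0" using assms(2) by auto
    ultimately show ?thesis
      using \<open>Zp_poly p r\<close> by (simp add: Zp_poly_add)
  qed
qed

lemma mono_val_0_eq_gauss_val:
  assumes "0 \<le> v \<alpha>"
  shows "mono_val v \<alpha> 0 f = gauss_val (map_poly of_rat f)"
proof -
  let ?B = "pcompose (map_poly of_rat f) [:\<alpha>, 1:]"
  have "degree ?B = degree f"
    by (simp add: degree_pcompose degree_map_poly)
  then have "mono_val v \<alpha> 0 f = gauss_val ?B"
    by (simp add: mono_val_def gauss_val_def)
  also have "\<dots> = gauss_val (map_poly of_rat f)"
    using assms by (rule gauss_val_pcompose_shift)
  finally show ?thesis .
qed

lemma mono_val_pos_iff_v_poly_pos: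
  assumes "0 \<le> v \<alpha>" and "0 < \<delta>" and "Zp_poly p f"
  shows "0 < mono_val v \<alpha> \<delta> f \<longleftrightarrow> 0 < v (poly (map_poly of_rat f) \<alpha>)"
proof (cases "\<delta> = \<infinity>")
  case True
  then show ?thesis by (simp add: mono_val_def)
next
  case False
  let ?B = "pcompose (map_poly of_rat f) [:\<alpha>, 1:]"
  have "0 \<le> gauss_val ?B"
    using assms(1,3) by (intro gauss_val_pcompose)
      (simp_all add: Zp_poly_iff_gauss_val le_gauss_val_pCons_iff v_one)
  then have B_nonneg: "0 \<le> v (coeff ?B i)" for i
    by (simp add: le_gauss_val_iff)
  have "0 < mono_val v \<alpha> \<delta> f \<longleftrightarrow> (\<forall>i\<le>degree f. 0 < v (coeff ?B i) + ereal (real i) * \<delta>)"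
    using False by (auto simp: mono_val_def)
  also have "\<dots> \<longleftrightarrow> 0 < v (coeff ?B 0)"
  proof (intro iffI allI impI)
    fix i assume "0 < v (coeff ?B 0)"
    then show "0 < v (coeff ?B i) + ereal (real i) * \<delta>"
      using assms(2) B_nonneg[of i]
      by (cases "i = 0")
        (simp_all add: zero_ereal_def[symmetric] add_nonneg_pos ereal_zero_less_0_iff)
  qed (drule spec[of _ 0], simp add: zero_ereal_def[symmetric])
  also have "coeff ?B 0 = poly (map_poly of_rat f) \<alpha>"
    by (simp add: poly_0_coeff_0[symmetric] poly_pcompose)
  finally show ?thesis .
qed

lemma Zp_poly_mono_val_0_pos_eq:
  assumes "0 \<le> v \<alpha>"
  shows "{f. Zp_poly p f \<and> 0 < mono_val v \<alpha> 0 f} = {smult (of_nat p) h | h. Zp_poly p h}"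
proof -
  have "Zp_poly p f \<and> 0 < mono_val v \<alpha> 0 f \<longleftrightarrow> (\<forall>i. in_pZp p (coeff f i))" for f
    using assms
    by (auto simp: mono_val_0_eq_gauss_val Zp_poly_iff_gauss_val in_pZp_coeffs_iff_gauss_val)
  then show ?thesis
    using in_pZp_coeffs_iff_smult_p[OF prime_gt_0_nat[OF prime]] by blast
qed

lemma v_poly_pos_iff_mem_ideal:
  assumes "0 \<le> v \<alpha>" and "lift_of_minpoly p v \<alpha> g" and "Zp_poly p f"
  shows "0 < v (poly (map_poly of_rat f) \<alpha>) \<longleftrightarrow>
    (\<exists>a b. Zp_poly p a \<and> Zp_poly p b \<and> f = smult (of_nat p) a + g * b)"
proof -
  define ev where "ev h = poly (map_poly of_rat h) \<alpha>" for h
  have ev_add: "ev (h + k) = ev h + ev k" and ev_mult: "ev (h * k) = ev h * ev k" for h k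
    by (simp_all add: ev_def map_poly_of_rat_add map_poly_of_rat_mult)
  have g_Zp: "Zp_poly p g" and g_monic: "lead_coeff g = 1" and g_root: "0 < v (ev g)"
    and g_min: "\<And>h. Zp_poly p h \<Longrightarrow> degree h < degree g \<Longrightarrow> 0 < v (ev h)
                  \<Longrightarrow> \<forall>i. in_pZp p (coeff h i)"
    using assms(2) unfolding lift_of_minpoly_def ev_def by blast+
  have ev_g_mult_pos: "0 < v (ev (g * b))" if "Zp_poly p b" for b
    unfolding ev_mult using g_root v_poly_nonneg[OF that assms(1)]
    by (intro v_mult_pos) (simp_all add: ev_def)
  show ?thesis
  proof
    assume f_root: "0 < v (poly (map_poly of_rat f) \<alpha>)"
    define q where "q = f div g"
    define r where "r = f mod g"
    have "Zp_poly p q" "Zp_poly p r"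
      using Zp_poly_div_mod_monic[OF g_Zp g_monic assms(3)] by (simp_all add: q_def r_def)
    have f_eq: "f = g * q + r"
      by (simp add: q_def r_def)
    have "degree g \<noteq> 0"
    proof
      assume "degree g = 0"
      then have "g = 1"
        using g_monic by (metis degree_0_id one_pCons)
      then show False
        using g_root by (simp add: ev_def v_one)
    qed
    then have "degree r < degree g"
      using degree_mod_less[of g f] g_monic by (cases "g = 0") (auto simp: r_def)
    moreover have "0 < v (ev r)"
    proof -
      have "ev r = ev f - ev (g * q)"
        using f_eq by (simp add: ev_add)
      then show ?thesis
        using v_diff_pos[OF f_root[folded ev_def] ev_g_mult_pos[OF \<open>Zp_poly p q\<close>]] by simp
    qed
    ultimately have "\<forall>i. in_pZp p (coeff r i)"
      using g_min \<open>Zp_poly p r\<close> by blast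
    then obtain a where "Zp_poly p a" "r = smult (of_nat p) a"
      using in_pZp_coeffs_iff_smult_p[OF prime_gt_0_nat[OF prime]] by blast
    then show "\<exists>a b. Zp_poly p a \<and> Zp_poly p b \<and> f = smult (of_nat p) a + g * b"
      using f_eq \<open>Zp_poly p q\<close> by (metis add.commute)
  next
    assume "\<exists>a b. Zp_poly p a \<and> Zp_poly p b \<and> f = smult (of_nat p) a + g * b"
    then obtain a b where "Zp_poly p a" "Zp_poly p b" "f = smult (of_nat p) a + g * b"
      by blast
    moreover have "0 < v (ev (smult (of_nat p) a))"
      using gauss_val_le_v_poly[OF gauss_val_smult_p[OF \<open>Zp_poly p a\<close>] assms(1)]
      unfolding ev_def by (rule less_le_trans[rotated]) simp
    ultimately show "0 < v (poly (map_poly of_rat f) \<alpha>)"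
      using ev_g_mult_pos by (simp add: ev_add v_add_pos flip: ev_def)
  qed
qed

lemma Zp_poly_mono_val_pos_eq:
  assumes "0 \<le> v \<alpha>" and "0 < \<delta>" and "lift_of_minpoly p v \<alpha> g"
  shows "{f. Zp_poly p f \<and> 0 < mono_val v \<alpha> \<delta> f} =
    {smult (of_nat p) a + g * b | a b. Zp_poly p a \<and> Zp_poly p b}"
proof -
  have "Zp_poly p g"
    using assms(3) by (simp add: lift_of_minpoly_def)
  then have "Zp_poly p (smult (of_nat p) a + g * b)" if "Zp_poly p a" "Zp_poly p b" for a b
    using that by (simp add: Zp_poly_add Zp_poly_mult Zp_poly_smult_p)
  then show ?thesis
    using mono_val_pos_iff_v_poly_pos[OF assms(1,2)] v_poly_pos_iff_mem_ideal[OF assms(1,3)]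
    by blast
qed

end

theorem mainTheorem14:
  fixes p :: nat and v :: "'a::field_char_0 \<Rightarrow> ereal" and \<alpha> :: 'a and \<delta> :: ereal
  assumes "prime p" and "is_Cp p v" and "0 \<le> v \<alpha>" and "0 \<le> \<delta>" and "admissible v \<alpha> \<delta>"
  shows "(\<delta> = 0 \<longrightarrow>
           {f. Zp_poly p f \<and> 0 < mono_val v \<alpha> \<delta> f} = {smult (of_nat p) h | h. Zp_poly p h}) \<and>
         (0 < \<delta> \<longrightarrow> (\<forall>g. lift_of_minpoly p v \<alpha> g \<longrightarrow>
           {f. Zp_poly p f \<and> 0 < mono_val v \<alpha> \<delta> f} =
           {smult (of_nat p) a + g * b | a b. Zp_poly p a \<and> Zp_poly p b}))"
proof -
  interpret padic_valuation p v
    using assms(1,2) by (rule is_Cp_imp_padic_valuation)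
  show ?thesis
    using Zp_poly_mono_val_0_pos_eq[OF assms(3)] Zp_poly_mono_val_pos_eq[OF assms(3)] by blast
qed

end
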